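(* Let $\mathcal{M}=(S,\boldsymbol{\pi},\mathbf{R})$ be a labelled continuous-time Markov chain, $\Phi_1,\Phi_2$ CSL state formulae, $I\subseteq\mathbb{R}_{\ge0}$ an interval, and let $S_X$ and $S_O$ be the exclude-from-refinement and once-only sets for $\Phi_1U^I\Phi_2$ (defined in the context). Let $T=\langle s_{i1},s_{i2},\ldots,s_{iN_i}\rangle$ be one of the sequences returned by the procedure TogetherSeqs applied to $(\mathcal{M},S_X,S_O)$. Let $\omega$ be a path satisfying $\Phi_1U^I\Phi_2$ and let $t\in I$ be the earliest time with $\omega@t\models\Phi_2$ (and $\omega@t'\models\Phi_1$ for all $t'\in[0,t)$). Then up to time $t$, the states of $T$ can appear on $\omega$ only as complete consecutive blocks $\ldots s_{i1}t_{i1}s_{i2}t_{i2}\ldots s_{iN_i}t_{iN_i}\ldots$.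
   Context: A CTMC $(S,\boldsymbol{\pi},\mathbf{R})$ has finite state set, initial distribution $\boldsymbol{\pi}$ and rate matrix $\mathbf{R}$; paths $\omega=s_1t_1s_2t_2\ldots$ have $\boldsymbol{\pi}(s_1)>0$, $\mathbf{R}(s_i,s_{i+1})>0$, $t_i>0$ the sojourn time, $\omega@t$ the state at time $t$. $\omega\models\Phi_1U^I\Phi_2$ iff $\exists t\in I$ with $\omega@t\models\Phi_2$ and $\omega@t'\models\Phi_1$ for $t'\in[0,t)$; $U$ alone means $I=[0,\infty)$; $P_{=?}[\Psi]$ is the probability of $\Psi$ under the initial distribution. For each state $s$ an atomic proposition $s$ holds exactly in $s$. $S_X=\{s\in S\mid P_{=?}[(\neg s\wedge\Phi_1)U\Phi_2]=P_{=?}[\Phi_1U\Phi_2]\}$. $S_O$ is the set of $s\in S\setminus S_X$ with $P_{=?}[\Phi_1U\Phi_2]>0$, $P_{=?}[(\neg s\wedge\Phi_1)U\Phi_2]=0$, and such that for every $s'$ reachable from $s$ in one step with positive probability, the probability from $s'$ of reaching $s$ without passing through $S_X$ is $0$. Procedure TogetherSeqs: set $States:=S\setminus(S_X\cup S_O)$ and $TS:=\emptyset$. While $States\ne\emptyset$: pick any $s\in States$, set $T:=\langle s\rangle$, remove $s$ from $States$; then repeatedly (while at least one direction is still open and $States\ne\emptyset$) try to extend $T$ to the left by $\mathrm{Pred}(\mathrm{head}(T))$ and to the right by $\mathrm{Succ}(\mathrm{tail}(T))$, removing each added state from $States$ and closing a direction once its function returns NIL; finally add $T$ to $TS$. Return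 $TS$. Here $\mathrm{Pred}(s)$ returns NIL if $\boldsymbol{\pi}(s)>0$, and otherwise returns some $s'\in States$ with $\mathbf{R}(s',s)>0$ and $\mathbf{R}(s',s'')=\mathbf{R}(s'',s)=0$ for all $s''\in S\setminus\{s,s'\}$, or NIL if none exists; $\mathrm{Succ}(s)$ returns some $s'\in States$ with $\boldsymbol{\pi}(s')=0$, $\mathbf{R}(s,s')>0$ and $\mathbf{R}(s,s'')=\mathbf{R}(s'',s')=0$ for all $s''\in S\setminus\{s,s'\}$, or NIL if none exists. *)

theory Defs
  imports "HOL-Analysis.Analysis"
begin

text \<open>A CTMC (S, pi, R) with S = UNIV :: 'a set. Convention: no self-loops (R s s = 0).\<close>
definition ctmc :: "('a::finite \<Rightarrow> real) \<Rightarrow> ('a \<Rightarrow> 'a \<Rightarrow> real) \<Rightarrow> bool" where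
  "ctmc \<pi> R \<longleftrightarrow> (\<forall>s. 0 \<le> \<pi> s) \<and> (\<Sum>s\<in>UNIV. \<pi> s) = 1 \<and>
     (\<forall>s s'. 0 \<le> R s s') \<and> (\<forall>s. R s s = 0)"

definition exit_rate :: "('a::finite \<Rightarrow> 'a \<Rightarrow> real) \<Rightarrow> 'a \<Rightarrow> real" where
  "exit_rate R s = (\<Sum>s'\<in>UNIV. R s s')"

definition emb :: "('a::finite \<Rightarrow> 'a \<Rightarrow> real) \<Rightarrow> 'a \<Rightarrow> 'a \<Rightarrow> real" where
  "emb R s s' = R s s' / exit_rate R s"

text \<open>Probability of the cylinder set of paths starting with the state sequence xs.\<close>
definition path_weight :: "('a::finite \<Rightarrow> real) \<Rightarrow> ('a \<Rightarrow> 'a \<Rightarrow> real) \<Rightarrow> 'a list \<Rightarrow> real" where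
  "path_weight \<pi> R xs = \<pi> (hd xs) * (\<Prod>i<length xs - 1. emb R (xs ! i) (xs ! Suc i))"

text \<open>P=?[Phi1 U Phi2] (unbounded until) under initial distribution pi: sum over the
  disjoint events "the first Phi2-state is the (n+1)-th state and all earlier states satisfy Phi1".\<close>
definition untilP :: "('a::finite \<Rightarrow> real) \<Rightarrow> ('a \<Rightarrow> 'a \<Rightarrow> real) \<Rightarrow> ('a \<Rightarrow> bool) \<Rightarrow> ('a \<Rightarrow> bool) \<Rightarrow> real" where
  "untilP \<pi> R \<Phi>1 \<Phi>2 = (\<Sum>n. \<Sum>xs\<in>{xs. length xs = Suc n \<and> \<Phi>2 (xs ! n) \<and>
        (\<forall>i<n. \<Phi>1 (xs ! i) \<and> \<not> \<Phi>2 (xs ! i))}. path_weight \<pi> R xs)"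

definition dirac :: "'a \<Rightarrow> 'a \<Rightarrow> real" where
  "dirac s = (\<lambda>u. if u = s then 1 else 0)"

definition SX :: "('a::finite \<Rightarrow> real) \<Rightarrow> ('a \<Rightarrow> 'a \<Rightarrow> real) \<Rightarrow> ('a \<Rightarrow> bool) \<Rightarrow> ('a \<Rightarrow> bool) \<Rightarrow> 'a set" where
  "SX \<pi> R \<Phi>1 \<Phi>2 = {s. untilP \<pi> R (\<lambda>u. u \<noteq> s \<and> \<Phi>1 u) \<Phi>2 = untilP \<pi> R \<Phi>1 \<Phi>2}"

definition SO :: "('a::finite \<Rightarrow> real) \<Rightarrow> ('a \<Rightarrow> 'a \<Rightarrow> real) \<Rightarrow> ('a \<Rightarrow> bool) \<Rightarrow> ('a \<Rightarrow> bool) \<Rightarrow> 'a set" where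
  "SO \<pi> R \<Phi>1 \<Phi>2 = {s. s \<notin> SX \<pi> R \<Phi>1 \<Phi>2 \<and> untilP \<pi> R \<Phi>1 \<Phi>2 > 0 \<and>
      untilP \<pi> R (\<lambda>u. u \<noteq> s \<and> \<Phi>1 u) \<Phi>2 = 0 \<and>
      (\<forall>s'. emb R s s' > 0 \<longrightarrow>
          untilP (dirac s') R (\<lambda>u. u \<notin> SX \<pi> R \<Phi>1 \<Phi>2) (\<lambda>u. u = s) = 0)}"

section \<open>Procedure TogetherSeqs (nondeterministic; formalised as a relation on runs)\<close>

text \<open>Possible non-NIL results of Pred(s) / Succ(s) for the current set States.\<close>
definition pred_cand :: "('a::finite \<Rightarrow> real) \<Rightarrow> ('a \<Rightarrow> 'a \<Rightarrow> real) \<Rightarrow> 'a set \<Rightarrow> 'a \<Rightarrow> 'a \<Rightarrow> bool" where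
  "pred_cand \<pi> R St s s' \<longleftrightarrow> \<pi> s = 0 \<and> s' \<in> St \<and> 0 < R s' s \<and>
     (\<forall>s''\<in>UNIV - {s, s'}. R s' s'' = 0 \<and> R s'' s = 0)"

definition succ_cand :: "('a::finite \<Rightarrow> real) \<Rightarrow> ('a \<Rightarrow> 'a \<Rightarrow> real) \<Rightarrow> 'a set \<Rightarrow> 'a \<Rightarrow> 'a \<Rightarrow> bool" where
  "succ_cand \<pi> R St s s' \<longleftrightarrow> s' \<in> St \<and> \<pi> s' = 0 \<and> 0 < R s s' \<and>
     (\<forall>s''\<in>UNIV - {s, s'}. R s s'' = 0 \<and> R s'' s' = 0)"

text \<open>One attempt to extend to the left: (T, States, left open) to the new triple.\<close>
inductive ext_left :: "('a::finite \<Rightarrow> real) \<Rightarrow> ('a \<Rightarrow> 'a \<Rightarrow> real) \<Rightarrow>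
    'a list \<times> 'a set \<times> bool \<Rightarrow> 'a list \<times> 'a set \<times> bool \<Rightarrow> bool" for \<pi> R where
  closed: "ext_left \<pi> R (T, St, False) (T, St, False)"
| extend: "pred_cand \<pi> R St (hd T) s' \<Longrightarrow> ext_left \<pi> R (T, St, True) (s' # T, St - {s'}, True)"
| nil: "\<not> (\<exists>s'. pred_cand \<pi> R St (hd T) s') \<Longrightarrow> ext_left \<pi> R (T, St, True) (T, St, False)"

inductive ext_right :: "('a::finite \<Rightarrow> real) \<Rightarrow> ('a \<Rightarrow> 'a \<Rightarrow> real) \<Rightarrow>
    'a list \<times> 'a set \<times> bool \<Rightarrow> 'a list \<times> 'a set \<times> bool \<Rightarrow> bool" for \<pi> R where
  closed: "ext_right \<pi> R (T, St, False) (T, St, False)"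
| extend: "succ_cand \<pi> R St (last T) s' \<Longrightarrow> ext_right \<pi> R (T, St, True) (T @ [s'], St - {s'}, True)"
| nil: "\<not> (\<exists>s'. succ_cand \<pi> R St (last T) s') \<Longrightarrow> ext_right \<pi> R (T, St, True) (T, St, False)"

text \<open>Inner loop: (T, States, left open, right open) to final (T, States).\<close>
inductive grow :: "('a::finite \<Rightarrow> real) \<Rightarrow> ('a \<Rightarrow> 'a \<Rightarrow> real) \<Rightarrow>
    'a list \<times> 'a set \<times> bool \<times> bool \<Rightarrow> 'a list \<times> 'a set \<Rightarrow> bool" for \<pi> R where
  stop: "\<not> (lo \<or> ro) \<or> St = {} \<Longrightarrow> grow \<pi> R (T, St, lo, ro) (T, St)"
| step: "lo \<or> ro \<Longrightarrow> St \<noteq> {} \<Longrightarrow> ext_left \<pi> R (T, St, lo) (T1, St1, lo') \<Longrightarrow>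
    ext_right \<pi> R (T1, St1, ro) (T2, St2, ro') \<Longrightarrow> grow \<pi> R (T2, St2, lo', ro') res \<Longrightarrow>
    grow \<pi> R (T, St, lo, ro) res"

text \<open>Outer loop: ts_run States TS result.\<close>
inductive ts_run :: "('a::finite \<Rightarrow> real) \<Rightarrow> ('a \<Rightarrow> 'a \<Rightarrow> real) \<Rightarrow>
    'a set \<Rightarrow> 'a list list \<Rightarrow> 'a list list \<Rightarrow> bool" for \<pi> R where
  finish: "ts_run \<pi> R {} TS TS"
| pick: "s \<in> St \<Longrightarrow> grow \<pi> R ([s], St - {s}, True, True) (T, St') \<Longrightarrow>
    ts_run \<pi> R St' (TS @ [T]) res \<Longrightarrow> ts_run \<pi> R St TS res"

definition together_seqs :: "('a::finite \<Rightarrow> real) \<Rightarrow> ('a \<Rightarrow> 'a \<Rightarrow> real) \<Rightarrow> 'a set \<Rightarrow> 'a set \<Rightarrow> 'a list list \<Rightarrow> bool" where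
  "together_seqs \<pi> R SXset SOset TS \<longleftrightarrow> ts_run \<pi> R (UNIV - (SXset \<union> SOset)) [] TS"

text \<open>A path: states sigma i, sojourn times tau i > 0; infinite sojourn only in absorbing states.\<close>
definition is_path :: "('a::finite \<Rightarrow> real) \<Rightarrow> ('a \<Rightarrow> 'a \<Rightarrow> real) \<Rightarrow> (nat \<Rightarrow> 'a) \<Rightarrow> (nat \<Rightarrow> ereal) \<Rightarrow> bool" where
  "is_path \<pi> R \<sigma> \<tau> \<longleftrightarrow> 0 < \<pi> (\<sigma> 0) \<and> (\<forall>i. 0 < \<tau> i) \<and>
     (\<forall>i. \<tau> i \<noteq> \<infinity> \<longrightarrow> 0 < R (\<sigma> i) (\<sigma> (Suc i))) \<and>
     (\<forall>i. \<tau> i = \<infinity> \<longrightarrow> (\<forall>s'. R (\<sigma> i) s' = 0))"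

text \<open>Entry time of the k-th state (0-indexed).\<close>
definition entry :: "(nat \<Rightarrow> ereal) \<Rightarrow> nat \<Rightarrow> ereal" where
  "entry \<tau> k = (\<Sum>i<k. \<tau> i)"

definition state_at :: "(nat \<Rightarrow> 'a) \<Rightarrow> (nat \<Rightarrow> ereal) \<Rightarrow> real \<Rightarrow> 'a \<Rightarrow> bool" where
  "state_at \<sigma> \<tau> t s \<longleftrightarrow> (\<exists>k. entry \<tau> k \<le> ereal t \<and> ereal t < entry \<tau> (Suc k) \<and> \<sigma> k = s)"

definition sat_at :: "(nat \<Rightarrow> 'a) \<Rightarrow> (nat \<Rightarrow> ereal) \<Rightarrow> real \<Rightarrow> ('a \<Rightarrow> bool) \<Rightarrow> bool" where
  "sat_at \<sigma> \<tau> t \<Phi> \<longleftrightarrow> (\<exists>s. state_at \<sigma> \<tau> t s \<and> \<Phi> s)"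

definition until_witness :: "(nat \<Rightarrow> 'a) \<Rightarrow> (nat \<Rightarrow> ereal) \<Rightarrow> ('a \<Rightarrow> bool) \<Rightarrow> ('a \<Rightarrow> bool) \<Rightarrow> real set \<Rightarrow> real \<Rightarrow> bool" where
  "until_witness \<sigma> \<tau> \<Phi>1 \<Phi>2 I t \<longleftrightarrow> t \<in> I \<and> sat_at \<sigma> \<tau> t \<Phi>2 \<and> (\<forall>t'\<in>{0..<t}. sat_at \<sigma> \<tau> t' \<Phi>1)"

end

theory Submission
  imports Defs
begin

text \<open>Every link \<open>T ! i \<rightarrow> T ! Suc i\<close> of a sequence built by TogetherSeqs is exclusive: it is
  the only transition out of \<open>T ! i\<close>, the only one into \<open>T ! Suc i\<close>, and \<open>T ! Suc i\<close> is not
  initial. So on a path every visit to \<open>T ! Suc i\<close> is preceded by \<open>T ! i\<close>, and \<open>T ! i\<close>, having a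
  positive exit rate, is never absorbing and is always followed by \<open>T ! Suc i\<close>. Only the
  finiteness of the time \<open>t\<close> matters: it guarantees that the visit is reached after finitely
  many finite sojourns, so the whole block can be traced backwards and forwards.\<close>

definition exclusive_link :: "('a::finite \<Rightarrow> real) \<Rightarrow> ('a \<Rightarrow> 'a \<Rightarrow> real) \<Rightarrow> 'a \<Rightarrow> 'a \<Rightarrow> bool" where
  "exclusive_link \<pi> R s s' \<longleftrightarrow> \<pi> s' = 0 \<and> 0 < R s s' \<and>
     (\<forall>s''. s'' \<notin> {s, s'} \<longrightarrow> R s s'' = 0 \<and> R s'' s' = 0)"

lemma successively_nth:
  assumes "successively P xs" and "Suc i < length xs"
  shows "P (xs ! i) (xs ! Suc i)"
  using assms by (induction P xs arbitrary: i rule: successively.induct) (auto simp: less_Suc_eq_0_disj)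

lemma pred_cand_exclusive_link: "pred_cand \<pi> R St s s' \<Longrightarrow> exclusive_link \<pi> R s' s"
  by (auto simp: pred_cand_def exclusive_link_def)

lemma succ_cand_exclusive_link: "succ_cand \<pi> R St s s' \<Longrightarrow> exclusive_link \<pi> R s s'"
  by (auto simp: succ_cand_def exclusive_link_def)

lemma ext_left_successively:
  "ext_left \<pi> R a b \<Longrightarrow> successively (exclusive_link \<pi> R) (fst a) \<Longrightarrow>
     successively (exclusive_link \<pi> R) (fst b)"
  by (induction rule: ext_left.induct) (auto simp: successively_Cons pred_cand_exclusive_link)

lemma ext_right_successively:
  "ext_right \<pi> R a b \<Longrightarrow> successively (exclusive_link \<pi> R) (fst a) \<Longrightarrow>
     successively (exclusive_link \<pi> R) (fst b)"
  by (induction rule: ext_right.induct) (auto simp: successively_append_iff succ_cand_exclusive_link)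

lemma grow_successively:
  "grow \<pi> R a b \<Longrightarrow> successively (exclusive_link \<pi> R) (fst a) \<Longrightarrow>
     successively (exclusive_link \<pi> R) (fst b)"
  by (induction rule: grow.induct) (use ext_left_successively ext_right_successively in fastforce)+

lemma ts_run_successively:
  assumes "ts_run \<pi> R St TS res" and "\<forall>T\<in>set TS. successively (exclusive_link \<pi> R) T"
  shows "\<forall>T\<in>set res. successively (exclusive_link \<pi> R) T"
  using assms
proof (induction rule: ts_run.induct)
  case (pick s St T St' TS res)
  then have "successively (exclusive_link \<pi> R) T"
    using grow_successively[OF pick.hyps(2)] by simp
  with pick show ?case by simp
qed simp

lemma together_seqs_successively:
  "together_seqs \<pi> R SXset SOset TS \<Longrightarrow> T \<in> set TS \<Longrightarrow> successively (exclusive_link \<pi> R) T"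
  unfolding together_seqs_def using ts_run_successively by fastforce

lemma entry_eq_infinity_iff: "entry \<tau> n = \<infinity> \<longleftrightarrow> (\<exists>i<n. \<tau> i = \<infinity>)"
  unfolding entry_def by (auto simp: sum_Pinfty)

lemma path_exclusive_link_backward:
  assumes "is_path \<pi> R \<sigma> \<tau>" and "R s' s' = 0" and "exclusive_link \<pi> R s s'"
    and "\<sigma> k = s'" and "\<forall>i<k. \<tau> i \<noteq> \<infinity>"
  shows "0 < k \<and> \<sigma> (k - 1) = s"
proof -
  have "k \<noteq> 0"
  proof
    assume "k = 0"
    then show False
      using assms(1,3,4) by (auto simp: is_path_def exclusive_link_def)
  qed
  then obtain k' where k: "k = Suc k'" using not0_implies_Suc by blast
  then have "0 < R (\<sigma> k') s'"
    using assms(1,4,5) by (auto simp: is_path_def)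
  then have "\<sigma> k' = s"
    using assms(2,3) unfolding exclusive_link_def by force
  with k show ?thesis by simp
qed

lemma path_exclusive_link_forward:
  assumes "is_path \<pi> R \<sigma> \<tau>" and "R s s = 0" and "exclusive_link \<pi> R s s'" and "\<sigma> k = s"
  shows "\<tau> k \<noteq> \<infinity> \<and> \<sigma> (Suc k) = s'"
proof -
  have link: "0 < R s s'" "\<forall>s''. s'' \<notin> {s, s'} \<longrightarrow> R s s'' = 0"
    using assms(3) by (auto simp: exclusive_link_def)
  have "\<tau> k \<noteq> \<infinity>"
    using assms(1,4) link(1) by (force simp: is_path_def)
  then have "0 < R s (\<sigma> (Suc k))"
    using assms(1,4) by (auto simp: is_path_def)
  then have "\<sigma> (Suc k) = s'"
    using assms(2) link(2) by force
  with \<open>\<tau> k \<noteq> \<infinity>\<close> show ?thesis by simp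
qed

lemma path_chain_backward:
  assumes "is_path \<pi> R \<sigma> \<tau>" and "\<forall>s. R s s = 0" and "successively (exclusive_link \<pi> R) T"
    and "j < length T" and "\<sigma> k = T ! j" and "\<forall>i<k. \<tau> i \<noteq> \<infinity>"
  shows "j \<le> k \<and> \<sigma> (k - j) = T ! 0"
  using assms(4-6)
proof (induction j arbitrary: k)
  case (Suc j)
  have "exclusive_link \<pi> R (T ! j) (T ! Suc j)"
    using assms(3) Suc.prems(1) by (rule successively_nth)
  then have k: "0 < k" "\<sigma> (k - 1) = T ! j"
    using path_exclusive_link_backward assms(1,2) Suc.prems(2,3) by blast+
  have "j \<le> k - 1 \<and> \<sigma> (k - 1 - j) = T ! 0"
    using Suc.IH[of "k - 1"] Suc.prems(1,3) k(2) by simp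
  with k(1) show ?case by auto
qed simp

lemma path_chain_forward:
  assumes "is_path \<pi> R \<sigma> \<tau>" and "\<forall>s. R s s = 0" and "successively (exclusive_link \<pi> R) T"
    and "\<sigma> p = T ! 0" and "\<forall>i<p. \<tau> i \<noteq> \<infinity>" and "m < length T"
  shows "\<sigma> (p + m) = T ! m \<and> (\<forall>i<p + m. \<tau> i \<noteq> \<infinity>)"
  using assms(6)
proof (induction m)
  case (Suc m)
  then have IH: "\<sigma> (p + m) = T ! m" "\<forall>i<p + m. \<tau> i \<noteq> \<infinity>" by auto
  have "exclusive_link \<pi> R (T ! m) (T ! Suc m)"
    using assms(3) Suc.prems by (rule successively_nth)
  then have "\<tau> (p + m) \<noteq> \<infinity> \<and> \<sigma> (Suc (p + m)) = T ! Suc m"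
    using path_exclusive_link_forward assms(1,2) IH(1) by blast
  with IH(2) show ?case by (auto simp: less_Suc_eq)
qed (simp add: assms(4,5))

theorem theorem3:
  fixes \<pi> :: "'a::finite \<Rightarrow> real" and R :: "'a \<Rightarrow> 'a \<Rightarrow> real"
    and \<Phi>1 \<Phi>2 :: "'a \<Rightarrow> bool" and I :: "real set"
    and TS :: "'a list list" and T :: "'a list"
    and \<sigma> :: "nat \<Rightarrow> 'a" and \<tau> :: "nat \<Rightarrow> ereal" and t :: real
  assumes "ctmc \<pi> R"
    and "is_interval I" and "I \<subseteq> {0..}"
    and "together_seqs \<pi> R (SX \<pi> R \<Phi>1 \<Phi>2) (SO \<pi> R \<Phi>1 \<Phi>2) TS" and "T \<in> set TS"
    and "is_path \<pi> R \<sigma> \<tau>"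
    and "until_witness \<sigma> \<tau> \<Phi>1 \<Phi>2 I t"
    and "\<forall>t''. t'' < t \<longrightarrow> \<not> until_witness \<sigma> \<tau> \<Phi>1 \<Phi>2 I t''"
  shows "\<forall>k j. entry \<tau> k \<le> ereal t \<and> j < length T \<and> \<sigma> k = T ! j \<longrightarrow>
           j \<le> k \<and> (\<forall>m<length T. \<sigma> (k - j + m) = T ! m \<and> entry \<tau> (k - j + m) < \<infinity>)"
proof (intro allI impI)
  fix k j
  assume visit: "entry \<tau> k \<le> ereal t \<and> j < length T \<and> \<sigma> k = T ! j"
  have no_loops: "\<forall>s. R s s = 0"
    using assms(1) by (simp add: ctmc_def)
  have chain: "successively (exclusive_link \<pi> R) T"
    using together_seqs_successively assms(4,5) .
  have finite_before: "\<forall>i<k. \<tau> i \<noteq> \<infinity>"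
    using visit entry_eq_infinity_iff[of \<tau> k] by force
  have start: "j \<le> k \<and> \<sigma> (k - j) = T ! 0"
    using path_chain_backward[OF assms(6) no_loops chain] visit finite_before by blast
  have "\<sigma> (k - j + m) = T ! m \<and> entry \<tau> (k - j + m) < \<infinity>" if "m < length T" for m
  proof -
    have "\<forall>i<k - j. \<tau> i \<noteq> \<infinity>"
      using finite_before by simp
    then show ?thesis
      using path_chain_forward[OF assms(6) no_loops chain, of "k - j" m] start that
      by (simp add: entry_eq_infinity_iff)
  qed
  with start show "j \<le> k \<and> (\<forall>m<length T. \<sigma> (k - j + m) = T ! m \<and> entry \<tau> (k - j + m) < \<infinity>)"
    by blast
qed

end
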